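(* Let $P=\Bbbk[x_1,x_2,x_3]$ with Poisson bracket $\{x_1,x_2\}=0$, $\{x_2,x_3\}=3x_1^2$, $\{x_3,x_1\}=0$. Then $\mathrm{PAut}_{\mathrm{gr}}(P)$ consists exactly of the maps whose matrix is \[ \begin{bmatrix}\epsilon & 0 & 0\\ a & b & c\\ d & e & f\end{bmatrix},\quad a,b,c,d,e,f\in\Bbbk,\ bf\neq ce,\ \epsilon^2=bf-ce, \] and the set of Poisson reflections of $P$ is \[ \mathrm{PR}(P)=\left\{\begin{bmatrix}-1&0&0\\ a&1&0\\ d&0&1\end{bmatrix}: a,d\in\Bbbk\right\}. \]
   Context: $\Bbbk$ is algebraically closed of characteristic $0$; $P$ has the standard grading. A graded Poisson automorphism $\phi$ (degree-preserving bijective algebra and Lie homomorphism) is identified with the matrix $[a_{ij}]$ where $\phi(x_i)=\sum_{k=1}^3 a_{ik}x_k$. A Poisson reflection is a finite-order graded Poisson automorphism $\phi$ such that $\phi|_{P_1}$ has eigenvalues $1,1,\xi$ for some primitive $m$-th root of unity $\xi\neq1$. *)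

theory Defs
  imports "HOL-Library.Poly_Mapping" "Jordan_Normal_Form.Char_Poly"
begin

text \<open>Polynomials in variables indexed by nat (x_1,x_2,x_3 are indices 0,1,2);
  a monomial is an exponent vector nat =>0 nat.\<close>

type_synonym 'k mpoly = "(nat \<Rightarrow>\<^sub>0 nat) \<Rightarrow>\<^sub>0 'k"

definition Xv :: "nat \<Rightarrow> 'k::comm_ring_1 mpoly" where
  "Xv i = Poly_Mapping.single (Poly_Mapping.single i 1) 1"

definition Cst :: "'k::comm_ring_1 \<Rightarrow> 'k mpoly" where
  "Cst c = Poly_Mapping.single 0 c"

definition Pset :: "'k::comm_ring_1 mpoly set" where
  "Pset = {f. \<forall>m\<in>Poly_Mapping.keys f. \<forall>i\<in>Poly_Mapping.keys m. i < 3}"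

definition mdeg :: "(nat \<Rightarrow>\<^sub>0 nat) \<Rightarrow> nat" where
  "mdeg m = (\<Sum>i\<in>Poly_Mapping.keys m. Poly_Mapping.lookup m i)"

definition Pdeg :: "nat \<Rightarrow> 'k::comm_ring_1 mpoly set" where
  "Pdeg n = {f\<in>Pset. \<forall>m\<in>Poly_Mapping.keys f. mdeg m = n}"

definition pd :: "nat \<Rightarrow> 'k::comm_ring_1 mpoly \<Rightarrow> 'k mpoly" where
  "pd i f = (\<Sum>m\<in>Poly_Mapping.keys f.
      Poly_Mapping.single (m - Poly_Mapping.single i 1)
        (of_nat (Poly_Mapping.lookup m i) * Poly_Mapping.lookup f m))"

definition Bgen :: "nat \<Rightarrow> nat \<Rightarrow> 'k::comm_ring_1 mpoly" where
  "Bgen i j = (if i = 1 \<and> j = 2 then Cst 3 * Xv 0 * Xv 0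
               else if i = 2 \<and> j = 1 then - (Cst 3 * Xv 0 * Xv 0) else 0)"

text \<open>The Poisson bracket: the unique biderivation extending Bgen.\<close>
definition pbr :: "'k::comm_ring_1 mpoly \<Rightarrow> 'k mpoly \<Rightarrow> 'k mpoly" where
  "pbr f g = (\<Sum>i<3. \<Sum>j<3. pd i f * pd j g * Bgen i j)"

definition graded_poisson_aut :: "('k::comm_ring_1 mpoly \<Rightarrow> 'k mpoly) \<Rightarrow> bool" where
  "graded_poisson_aut \<phi> \<longleftrightarrow>
     bij_betw \<phi> Pset Pset \<and>
     (\<forall>f\<in>Pset. \<forall>g\<in>Pset. \<phi> (f + g) = \<phi> f + \<phi> g \<and> \<phi> (f * g) = \<phi> f * \<phi> g
                       \<and> \<phi> (pbr f g) = pbr (\<phi> f) (\<phi> g)) \<and>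
     (\<forall>c. \<forall>f\<in>Pset. \<phi> (Cst c * f) = Cst c * \<phi> f) \<and>
     \<phi> 1 = 1 \<and>
     (\<forall>n. \<phi> ` Pdeg n \<subseteq> Pdeg n)"

definition has_matrix :: "('k::comm_ring_1 mpoly \<Rightarrow> 'k mpoly) \<Rightarrow> 'k mat \<Rightarrow> bool" where
  "has_matrix \<phi> A \<longleftrightarrow> A \<in> carrier_mat 3 3 \<and>
     (\<forall>i<3. \<phi> (Xv i) = (\<Sum>k<3. Cst (A $$ (i, k)) * Xv k))"

definition primitive_root :: "nat \<Rightarrow> 'k::field \<Rightarrow> bool" where
  "primitive_root m \<xi> \<longleftrightarrow> 0 < m \<and> \<xi> ^ m = 1 \<and> (\<forall>k. 0 < k \<and> k < m \<longrightarrow> \<xi> ^ k \<noteq> 1)"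

text \<open>Poisson reflection: finite-order graded Poisson automorphism whose
  restriction to P_1 has eigenvalues 1,1,xi (with multiplicity), xi a primitive
  m-th root of unity, xi ~= 1. The restriction to P_1 has matrix A^T in basis
  x_1,x_2,x_3, whose characteristic polynomial equals that of A.\<close>
definition poisson_reflection :: "('k::field mpoly \<Rightarrow> 'k mpoly) \<Rightarrow> bool" where
  "poisson_reflection \<phi> \<longleftrightarrow> graded_poisson_aut \<phi> \<and>
     (\<exists>n>0. \<forall>f\<in>Pset. (\<phi> ^^ n) f = f) \<and>
     (\<exists>A m \<xi>. has_matrix \<phi> A \<and> primitive_root m \<xi> \<and> \<xi> \<noteq> 1 \<and>
        char_poly A = [:-1, 1:] ^ 2 * [:-\<xi>, 1:])"

end

(*
  Comparing coefficients in the image of {x2,x3} = 3 x1^2 under a graded Poisson automorphism,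
  whose matrix A acts by the linear substitution x_i |-> sum_k A_ik x_k, forces A_12 = A_13 = 0
  and A_11^2 = det B for the lower right block B = [b c; e f].  Conversely every such substitution
  preserves the bracket on generators, hence everywhere by the Leibniz rule, and is invertible
  because det A = A_11^3 is nonzero.

  For a reflection, (t - eps) (t^2 - tr B t + det B) = (t - 1)^2 (t - xi) together with
  eps^2 = det B and xi ~= 1 gives eps = -1, tr B = 2, det B = 1.  Then N = B - I satisfies
  N^2 = 0, so B^n = I + n N, and finite order in characteristic 0 forces B = I.
*)

theory Submission
  imports Defs
begin

section \<open>Three by three matrices\<close>

lemma less_3_cases: "(i::nat) < 3 \<Longrightarrow> (i = 0 \<Longrightarrow> P) \<Longrightarrow> (i = 1 \<Longrightarrow> P) \<Longrightarrow> (i = 2 \<Longrightarrow> P) \<Longrightarrow> P"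
  by linarith

lemma sum_lessThan_3: "(\<Sum>i<(3::nat). F i) = F 0 + F 1 + F 2"
  by (simp add: lessThan_nat_numeral add_ac)

lemma det_dim_2:
  assumes "(A :: 'a :: comm_ring_1 mat) \<in> carrier_mat 2 2"
  shows "det A = A $$ (0,0) * A $$ (1,1) - A $$ (0,1) * A $$ (1,0)"
proof -
  have "det A = (\<Sum>i<2. A $$ (i,0) * cofactor A i 0)"
    using assms by (intro laplace_expansion_column) auto
  also have "\<dots> = A $$ (0,0) * A $$ (1,1) - A $$ (0,1) * A $$ (1,0)"
    using assms by (simp add: numeral_2_eq_2 cofactor_def det_single mat_delete_def)
  finally show ?thesis .
qed

lemma det_dim_3:
  assumes "(A :: 'a :: comm_ring_1 mat) \<in> carrier_mat 3 3"
  shows "det A = A $$ (0,0) * (A $$ (1,1) * A $$ (2,2) - A $$ (1,2) * A $$ (2,1))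
     - A $$ (1,0) * (A $$ (0,1) * A $$ (2,2) - A $$ (0,2) * A $$ (2,1))
     + A $$ (2,0) * (A $$ (0,1) * A $$ (1,2) - A $$ (0,2) * A $$ (1,1))"
proof -
  have "det A = (\<Sum>i<3. A $$ (i,0) * cofactor A i 0)"
    using assms by (intro laplace_expansion_column) auto
  also have "\<dots> = A $$ (0,0) * cofactor A 0 0 + A $$ (1,0) * cofactor A 1 0 + A $$ (2,0) * cofactor A 2 0"
    by (simp add: lessThan_nat_numeral)
  finally show ?thesis
    using assms by (simp add: cofactor_def det_dim_2 mat_delete_def numeral_2_eq_2 algebra_simps)
qed

lemma mat_of_rows_list_3_carrier:
  "mat_of_rows_list 3 [[x00, x01, x02], [x10, x11, x12], [x20, x21, x22]] \<in> carrier_mat 3 3"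
  unfolding mat_of_rows_list_def carrier_mat_def by simp

lemma index_mult_mat_3:
  assumes "A \<in> carrier_mat 3 3" "B \<in> carrier_mat 3 3" "i < 3" "j < 3"
  shows "(A * B) $$ (i, j) = A $$ (i, 0) * B $$ (0, j) + A $$ (i, 1) * B $$ (1, j) + A $$ (i, 2) * B $$ (2, j)"
  using assms by (simp add: scalar_prod_def atLeast0LessThan sum_lessThan_3)

lemma mat_3_eq_block_lower:
  assumes "A \<in> carrier_mat 3 3" "A $$ (0, 1) = 0" "A $$ (0, 2) = 0"
  shows "A = mat_of_rows_list 3 [[A $$ (0, 0), 0, 0], [A $$ (1, 0), A $$ (1, 1), A $$ (1, 2)],
                                 [A $$ (2, 0), A $$ (2, 1), A $$ (2, 2)]]" (is "A = ?B")
proof (rule eq_matI)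
  fix i j assume "i < dim_row ?B" "j < dim_col ?B"
  then have "i < 3" "j < 3"
    by (simp_all add: mat_of_rows_list_def)
  then show "A $$ (i, j) = ?B $$ (i, j)"
    using assms by (elim less_3_cases) (simp_all add: mat_of_rows_list_def)
qed (use assms in \<open>simp_all add: mat_of_rows_list_def\<close>)

lemma det_block_lower:
  "det (mat_of_rows_list 3 [[\<epsilon>, 0, 0], [a, b, c], [d, e, f]] :: 'k::comm_ring_1 mat) = \<epsilon> * (b * f - c * e)"
  by (subst det_dim_3[OF mat_of_rows_list_3_carrier]) (simp add: mat_of_rows_list_def)

lemma char_poly_block_lower:
  "char_poly (mat_of_rows_list 3 [[\<epsilon>, 0, 0], [a, b, c], [d, e, f]] :: 'k::comm_ring_1 mat)
     = [:-\<epsilon>, 1:] * [:b * f - c * e, -(b + f), 1:]"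
  unfolding char_poly_def
  by (subst det_dim_3[OF char_poly_matrix_closed[OF mat_of_rows_list_3_carrier]])
     (simp add: char_poly_matrix_def mat_of_rows_list_def algebra_simps)

section \<open>Polynomials in three variables\<close>

lemma Cst_0 [simp]: "Cst 0 = 0"
  by (simp add: Cst_def)

lemma Cst_1 [simp]: "Cst 1 = 1"
  by (simp add: Cst_def)

lemma Cst_add: "Cst (a + b) = Cst a + Cst b"
  by (simp add: Cst_def single_add)

lemma Cst_mult: "Cst (a * b) = Cst a * Cst b"
  by (simp add: Cst_def mult_single)

lemma Cst_diff: "Cst (a - b) = Cst a - Cst b"
  by (simp add: Cst_def single_diff)

lemma Cst_numeral: "Cst (numeral n) = numeral n"
  by (simp add: Cst_def)

lemma lookup_Cst_mult: "Poly_Mapping.lookup (Cst c * f) m = c * Poly_Mapping.lookup f m"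
  by (simp add: Cst_def flip: mult_map_scale_conv_mult) (simp add: Poly_Mapping.map.rep_eq when_def)

lemma Xv_power: "Xv i ^ k = Poly_Mapping.single (Poly_Mapping.single i k) 1"
  by (induction k) (simp_all add: Xv_def mult_single single_add[symmetric] add.commute)

lemma Xv_neq_0: "Xv i \<noteq> 0"
  by (metis Xv_def lookup_single_eq lookup_zero zero_neq_one)

lemma single_eq_single_iff:
  "v \<noteq> 0 \<Longrightarrow> Poly_Mapping.single i v = Poly_Mapping.single j v \<longleftrightarrow> i = j"
  by (metis lookup_single_eq lookup_single_not_eq)

lemma keys_add_single:
  assumes "m \<notin> Poly_Mapping.keys f" "c \<noteq> 0"
  shows "Poly_Mapping.keys (f + Poly_Mapping.single m c) = insert m (Poly_Mapping.keys f)"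
  using assms by (auto simp: in_keys_iff lookup_add lookup_single when_def split: if_splits)

lemma poly_mapping_induct_single [case_names zero add_single]:
  assumes "P 0"
    and "\<And>f m c. m \<notin> Poly_Mapping.keys f \<Longrightarrow> c \<noteq> 0 \<Longrightarrow> P f \<Longrightarrow> P (f + Poly_Mapping.single m c)"
  shows "P f"
proof (induction f rule: update_induct)
  case (update f m c)
  have "Poly_Mapping.update m c f = f + Poly_Mapping.single m c"
    using update.hyps(1)
    by (intro poly_mapping_eqI) (auto simp: lookup_update lookup_add lookup_single when_def in_keys_iff)
  then show ?case using assms(2) update by simp
qed (use assms(1) in simp)

lemma additive_eq_on_single:
  assumes "additive F" "additive G"
    and "\<And>m c. F (Poly_Mapping.single m c) = G (Poly_Mapping.single m c)"
  shows "F f = G f"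
  by (induction f rule: poly_mapping_induct_single)
     (simp_all add: additive.zero[OF assms(1)] additive.zero[OF assms(2)]
                    additive.add[OF assms(1)] additive.add[OF assms(2)] assms(3))

lemma Pset_iff: "f \<in> Pset \<longleftrightarrow> (\<forall>m\<in>Poly_Mapping.keys f. Poly_Mapping.keys m \<subseteq> {..<3})"
  by (auto simp: Pset_def)

lemma Pset_0 [simp]: "0 \<in> Pset"
  by (simp add: Pset_iff)

lemma Pset_single: "Poly_Mapping.keys m \<subseteq> {..<3} \<Longrightarrow> Poly_Mapping.single m c \<in> Pset"
  by (simp add: Pset_iff)

lemma Pset_add: "f \<in> Pset \<Longrightarrow> g \<in> Pset \<Longrightarrow> f + g \<in> Pset"
  using keys_add[of f g] by (auto simp: Pset_iff)

lemma Pset_mult: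
  assumes "f \<in> Pset" "g \<in> Pset"
  shows "f * g \<in> Pset"
  unfolding Pset_iff
proof
  fix m assume "m \<in> Poly_Mapping.keys (f * g)"
  then obtain a b where "m = a + b" "a \<in> Poly_Mapping.keys f" "b \<in> Poly_Mapping.keys g"
    using keys_mult by blast
  then show "Poly_Mapping.keys m \<subseteq> {..<3}"
    using assms keys_add[of a b] unfolding Pset_iff by blast
qed

lemma Pset_Cst [simp]: "Cst c \<in> Pset"
  by (simp add: Cst_def Pset_single)

lemma Pset_1 [simp]: "1 \<in> Pset"
  using Pset_Cst[of 1] by simp

lemma Pset_Xv: "i < 3 \<Longrightarrow> Xv i \<in> Pset"
  by (simp add: Xv_def Pset_single)

lemma Pset_sum: "(\<And>s. s \<in> S \<Longrightarrow> g s \<in> Pset) \<Longrightarrow> sum g S \<in> Pset"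
  by (induction S rule: infinite_finite_induct) (simp_all add: Pset_add)

lemma Pset_prod: "(\<And>s. s \<in> S \<Longrightarrow> g s \<in> Pset) \<Longrightarrow> prod g S \<in> Pset"
  by (induction S rule: infinite_finite_induct) (simp_all add: Pset_mult)

lemma Pset_power: "f \<in> Pset \<Longrightarrow> f ^ k \<in> Pset"
  by (induction k) (simp_all add: Pset_mult)

lemma Pset_induct [consumes 1, case_names zero Cst add mult_Xv]:
  assumes f: "f \<in> Pset" and zero: "P 0" and Cst: "\<And>c. P (Cst c)"
    and add: "\<And>g h. g \<in> Pset \<Longrightarrow> h \<in> Pset \<Longrightarrow> P g \<Longrightarrow> P h \<Longrightarrow> P (g + h)"
    and mult_Xv: "\<And>g i. g \<in> Pset \<Longrightarrow> i < 3 \<Longrightarrow> P g \<Longrightarrow> P (g * Xv i)"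
  shows "P f"
proof -
  have mult_Xv_power: "P (g * Xv i ^ k)" if "g \<in> Pset" "i < 3" "P g" for g i k
    using that
  proof (induction k)
    case (Suc k)
    have "P (g * Xv i ^ k * Xv i)"
      using Suc by (intro mult_Xv) (simp_all add: Pset_mult Pset_power Pset_Xv)
    then show ?case
      by (simp only: power_Suc2 mult.assoc)
  qed simp
  have monomial: "P (Poly_Mapping.single m c)" if "Poly_Mapping.keys m \<subseteq> {..<3}" for m c
    using that
  proof (induction m rule: poly_mapping_induct_single)
    case zero
    then show ?case using Cst[of c] by (simp add: Cst_def)
  next
    case (add_single m i k)
    then have "i < 3" "Poly_Mapping.keys m \<subseteq> {..<3}"
      by (simp_all add: keys_add_single)
    moreover have "Poly_Mapping.single (m + Poly_Mapping.single i k) c = Poly_Mapping.single m c * Xv i ^ k"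
      by (simp add: Xv_power mult_single)
    ultimately show ?case
      using add_single.IH by (metis mult_Xv_power Pset_single)
  qed
  have "f \<in> Pset \<longrightarrow> P f"
  proof (induction f rule: poly_mapping_induct_single)
    case (add_single f m c)
    then show ?case using add monomial Pset_single by (simp add: Pset_iff keys_add_single)
  qed (simp add: zero)
  then show ?thesis using f by simp
qed

lemma mdeg_eq_sum:
  "finite S \<Longrightarrow> Poly_Mapping.keys m \<subseteq> S \<Longrightarrow> mdeg m = (\<Sum>i\<in>S. Poly_Mapping.lookup m i)"
  unfolding mdeg_def by (rule sum.mono_neutral_left) (auto simp: in_keys_iff)

lemma mdeg_add: "mdeg (m + n) = mdeg m + mdeg n"
proof -
  let ?S = "Poly_Mapping.keys m \<union> Poly_Mapping.keys n"
  have "mdeg (m + n) = (\<Sum>i\<in>?S. Poly_Mapping.lookup (m + n) i)"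
    using keys_add[of m n] by (intro mdeg_eq_sum) auto
  moreover have "mdeg m = (\<Sum>i\<in>?S. Poly_Mapping.lookup m i)" "mdeg n = (\<Sum>i\<in>?S. Poly_Mapping.lookup n i)"
    by (intro mdeg_eq_sum; simp)+
  ultimately show ?thesis
    by (simp add: lookup_add sum.distrib)
qed

lemma Pdeg_0 [simp]: "0 \<in> Pdeg n"
  by (simp add: Pdeg_def)

lemma Pdeg_add: "f \<in> Pdeg n \<Longrightarrow> g \<in> Pdeg n \<Longrightarrow> f + g \<in> Pdeg n"
  using keys_add[of f g] by (auto simp: Pdeg_def Pset_add)

lemma Pdeg_mult:
  assumes "f \<in> Pdeg p" "g \<in> Pdeg q"
  shows "f * g \<in> Pdeg (p + q)"
proof -
  have "mdeg m = p + q" if "m \<in> Poly_Mapping.keys (f * g)" for m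
  proof -
    obtain a b where "m = a + b" "a \<in> Poly_Mapping.keys f" "b \<in> Poly_Mapping.keys g"
      using keys_mult \<open>m \<in> _\<close> by blast
    then show ?thesis using assms by (simp add: Pdeg_def mdeg_add)
  qed
  then show ?thesis using assms by (simp add: Pdeg_def Pset_mult)
qed

lemma Pdeg_Cst: "Cst c \<in> Pdeg 0"
  using Pset_Cst[of c] by (simp add: Pdeg_def Cst_def mdeg_def)

lemma Pdeg_1 [simp]: "1 \<in> Pdeg 0"
  using Pdeg_Cst[of 1] by simp

lemma Pdeg_Xv: "i < 3 \<Longrightarrow> Xv i \<in> Pdeg 1"
  using Pset_Xv[of i] by (simp add: Pdeg_def Xv_def mdeg_def)

lemma Pdeg_sum: "(\<And>s. s \<in> S \<Longrightarrow> g s \<in> Pdeg n) \<Longrightarrow> sum g S \<in> Pdeg n"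
  by (induction S rule: infinite_finite_induct) (simp_all add: Pdeg_add)

lemma Pdeg_prod: "(\<And>s. s \<in> S \<Longrightarrow> g s \<in> Pdeg (d s)) \<Longrightarrow> prod g S \<in> Pdeg (sum d S)"
  by (induction S rule: infinite_finite_induct) (simp_all add: Pdeg_mult)

lemma Pdeg_power: "f \<in> Pdeg p \<Longrightarrow> f ^ k \<in> Pdeg (k * p)"
  using Pdeg_prod[of "{..<k}" "\<lambda>_. f" "\<lambda>_. p"] by simp

section \<open>Partial derivatives and the bracket\<close>

lemma pd_single:
  "pd i (Poly_Mapping.single m c) =
     Poly_Mapping.single (m - Poly_Mapping.single i 1) (of_nat (Poly_Mapping.lookup m i) * c)"
  by (cases "c = 0") (simp_all add: pd_def)

lemma pd_add: "pd i (f + g) = pd i f + pd i g"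
  unfolding pd_def
  by (rule setsum_keys_plus_distrib) (simp_all add: distrib_left single_add)

text \<open>The truncated subtraction of exponents is harmless: when \<open>x\<^sub>i\<close> does not occur in the
  monomial, the coefficient vanishes.\<close>

lemma single_diff_add_shift:
  fixes m n :: "nat \<Rightarrow>\<^sub>0 nat"
  shows "Poly_Mapping.single (m - Poly_Mapping.single i 1 + n) (of_nat (Poly_Mapping.lookup m i) * c) =
         Poly_Mapping.single (m + n - Poly_Mapping.single i 1) (of_nat (Poly_Mapping.lookup m i) * c)"
proof (cases "Poly_Mapping.lookup m i = 0")
  case False
  then have "m - Poly_Mapping.single i 1 + n = m + n - Poly_Mapping.single i 1"
    by (intro poly_mapping_eqI) (auto simp: lookup_add lookup_minus lookup_single when_def)
  then show ?thesis by simp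
qed simp

lemma pd_mult_single:
  "pd i (Poly_Mapping.single m a * Poly_Mapping.single n b) =
     pd i (Poly_Mapping.single m a) * Poly_Mapping.single n b
     + Poly_Mapping.single m a * pd i (Poly_Mapping.single n b)"
proof -
  let ?e = "Poly_Mapping.single i 1" and ?l = "\<lambda>p. of_nat (Poly_Mapping.lookup p i)"
  have "pd i (Poly_Mapping.single m a * Poly_Mapping.single n b) =
      Poly_Mapping.single (m + n - ?e) (?l m * (a * b)) + Poly_Mapping.single (m + n - ?e) (?l n * (a * b))"
    by (simp add: pd_single mult_single lookup_add distrib_right flip: single_add)
  also have "\<dots> = Poly_Mapping.single (m - ?e + n) (?l m * (a * b))
      + Poly_Mapping.single (n - ?e + m) (?l n * (a * b))"
    by (simp only: single_diff_add_shift add.commute[of n m])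
  also have "\<dots> = pd i (Poly_Mapping.single m a) * Poly_Mapping.single n b
     + Poly_Mapping.single m a * pd i (Poly_Mapping.single n b)"
    by (simp add: pd_single mult_single add.commute mult_ac)
  finally show ?thesis .
qed

lemma pd_mult:
  fixes f g :: "'k::comm_ring_1 mpoly"
  shows "pd i (f * g) = pd i f * g + f * pd i g"
proof -
  have additive: "additive (\<lambda>g. pd i (h * g))" "additive (\<lambda>g. pd i h * g + h * pd i g)"
    "additive (\<lambda>h. pd i (h * g))" "additive (\<lambda>h. pd i h * g + h * pd i g)"
    for h g :: "'k mpoly"
    by unfold_locales (simp_all add: pd_add distrib_left distrib_right)
  have "pd i (Poly_Mapping.single m a * g) =
      pd i (Poly_Mapping.single m a) * g + Poly_Mapping.single m a * pd i g" for m a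
    by (rule additive_eq_on_single[OF additive(1,2)]) (rule pd_mult_single)
  then show ?thesis
    by (rule additive_eq_on_single[OF additive(3,4)])
qed

lemma pd_Cst [simp]: "pd i (Cst c) = 0"
  by (simp add: Cst_def pd_single)

lemma pd_Xv: "pd i (Xv k) = (if i = k then 1 else 0)"
  by (simp add: Xv_def pd_single lookup_single when_def)

lemma pbr_eq: "pbr f g = (pd 1 f * pd 2 g - pd 2 f * pd 1 g) * (Cst 3 * Xv 0 * Xv 0)"
  by (simp add: pbr_def sum_lessThan_3 Bgen_def algebra_simps)

lemma pbr_add_left: "pbr (f + h) g = pbr f g + pbr h g"
  by (simp add: pbr_eq pd_add algebra_simps)

lemma pbr_add_right: "pbr g (f + h) = pbr g f + pbr g h"
  by (simp add: pbr_eq pd_add algebra_simps)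

lemma pbr_mult_left: "pbr (f * h) g = f * pbr h g + h * pbr f g"
  by (simp add: pbr_eq pd_mult algebra_simps)

lemma pbr_mult_right: "pbr g (f * h) = f * pbr g h + h * pbr g f"
  by (simp add: pbr_eq pd_mult algebra_simps)

lemma pbr_Cst_left [simp]: "pbr (Cst c) g = 0"
  by (simp add: pbr_eq)

lemma pbr_Cst_right [simp]: "pbr g (Cst c) = 0"
  by (simp add: pbr_eq)

lemma pbr_0_left [simp]: "pbr 0 g = 0"
  using pbr_Cst_left[of 0] by simp

lemma pbr_0_right [simp]: "pbr g 0 = 0"
  using pbr_Cst_right[of _ 0] by simp

lemma pbr_Xv: "pbr (Xv i) (Xv j) = Bgen i j"
  by (simp add: pbr_eq pd_Xv Bgen_def)

section \<open>Linear forms\<close>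

definition lin_form :: "'k::comm_ring_1 \<Rightarrow> 'k \<Rightarrow> 'k \<Rightarrow> 'k mpoly" where
  "lin_form x y z = Cst x * Xv 0 + Cst y * Xv 1 + Cst z * Xv 2"

lemma lin_form_Xv:
  "lin_form 1 0 0 = Xv 0" "lin_form 0 1 0 = Xv 1" "lin_form 0 0 1 = Xv 2"
  by (simp_all add: lin_form_def)

lemma lin_form_linear_combination:
  "Cst x * lin_form p q r + Cst y * lin_form p' q' r' + Cst z * lin_form p'' q'' r'' =
     lin_form (x * p + y * p' + z * p'') (x * q + y * q' + z * q'') (x * r + y * r' + z * r'')"
  by (simp add: lin_form_def Cst_add Cst_mult algebra_simps)

lemma Pset_lin_form: "lin_form x y z \<in> Pset"
  unfolding lin_form_def by (intro Pset_add Pset_mult Pset_Cst Pset_Xv) auto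

lemma Pdeg_lin_form:
  fixes x y z :: "'k::comm_ring_1"
  shows "lin_form x y z \<in> Pdeg 1"
proof -
  have "Cst c * Xv i \<in> Pdeg 1" if "i < 3" for c :: 'k and i
    using Pdeg_mult[OF Pdeg_Cst Pdeg_Xv[OF that]] by simp
  then show ?thesis unfolding lin_form_def by (intro Pdeg_add) simp_all
qed

lemma pbr_lin_form:
  "pbr (lin_form x y z) (lin_form x' y' z') = Cst (3 * (y * z' - z * y')) * (Xv 0 * Xv 0)"
  by (simp add: pbr_eq lin_form_def pd_add pd_mult pd_Xv Cst_mult Cst_diff Cst_numeral algebra_simps)

lemma lookup_lin_form:
  "Poly_Mapping.lookup (lin_form x y z) (Poly_Mapping.single 0 1) = x"
  "Poly_Mapping.lookup (lin_form x y z) (Poly_Mapping.single 1 1) = y"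
  "Poly_Mapping.lookup (lin_form x y z) (Poly_Mapping.single 2 1) = z"
  by (simp_all add: lin_form_def lookup_add lookup_Cst_mult Xv_def lookup_single when_def
      single_eq_single_iff)

lemma lin_form_eq_iff: "lin_form x y z = lin_form x' y' z' \<longleftrightarrow> x = x' \<and> y = y' \<and> z = z'"
  by (metis lookup_lin_form)

lemma lookup_Xv_mult_Xv:
  "Poly_Mapping.lookup (Xv i * Xv j) (Poly_Mapping.single t 2) = (if i = t \<and> j = t then 1 else 0)"
proof -
  have "Poly_Mapping.single i 1 + Poly_Mapping.single j 1 = Poly_Mapping.single t (2::nat) \<longleftrightarrow> i = t \<and> j = t"
  proof
    assume "Poly_Mapping.single i 1 + Poly_Mapping.single j 1 = Poly_Mapping.single t (2::nat)"
    then have "Poly_Mapping.lookup (Poly_Mapping.single i 1 + Poly_Mapping.single j 1) t = (2::nat)"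
      by simp
    then show "i = t \<and> j = t"
      by (auto simp: lookup_add lookup_single when_def split: if_splits)
  qed (metis one_add_one single_add)
  then show ?thesis
    by (simp add: Xv_def mult_single lookup_single when_def)
qed

lemma lin_form_square:
  "lin_form x y z * lin_form x y z =
     Cst (x * x) * (Xv 0 * Xv 0) + Cst (y * y) * (Xv 1 * Xv 1) + Cst (z * z) * (Xv 2 * Xv 2)
     + Cst (2 * x * y) * (Xv 0 * Xv 1) + Cst (2 * x * z) * (Xv 0 * Xv 2) + Cst (2 * y * z) * (Xv 1 * Xv 2)"
  by (simp add: lin_form_def Cst_add Cst_mult Cst_numeral algebra_simps)

lemma lookup_lin_form_square:
  "Poly_Mapping.lookup (lin_form x y z * lin_form x y z) (Poly_Mapping.single 0 2) = x * x"
  "Poly_Mapping.lookup (lin_form x y z * lin_form x y z) (Poly_Mapping.single 1 2) = y * y"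
  "Poly_Mapping.lookup (lin_form x y z * lin_form x y z) (Poly_Mapping.single 2 2) = z * z"
  by (simp_all only: lin_form_square lookup_add lookup_Cst_mult lookup_Xv_mult_Xv) simp_all

section \<open>Linear substitutions\<close>

definition lin_row :: "'k::comm_ring_1 mat \<Rightarrow> nat \<Rightarrow> 'k mpoly" where
  "lin_row A i = lin_form (A $$ (i, 0)) (A $$ (i, 1)) (A $$ (i, 2))"

definition lin_subst :: "'k::comm_ring_1 mat \<Rightarrow> 'k mpoly \<Rightarrow> 'k mpoly" where
  "lin_subst A f = (\<Sum>m\<in>Poly_Mapping.keys f.
      Cst (Poly_Mapping.lookup f m) * (\<Prod>i<3. lin_row A i ^ Poly_Mapping.lookup m i))"

lemma lin_subst_single:
  "lin_subst A (Poly_Mapping.single m c) = Cst c * (\<Prod>i<3. lin_row A i ^ Poly_Mapping.lookup m i)"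
  by (cases "c = 0") (simp_all add: lin_subst_def)

lemma lin_subst_add: "lin_subst A (f + g) = lin_subst A f + lin_subst A g"
  unfolding lin_subst_def
  by (rule setsum_keys_plus_distrib) (simp_all add: Cst_add distrib_right)

lemma additive_lin_subst: "additive (lin_subst A)"
  by unfold_locales (rule lin_subst_add)

lemma lin_subst_0 [simp]: "lin_subst A 0 = 0"
  by (rule additive.zero[OF additive_lin_subst])

lemma lin_subst_mult:
  fixes f g :: "'k::comm_ring_1 mpoly"
  shows "lin_subst A (f * g) = lin_subst A f * lin_subst A g"
proof -
  have additive: "additive (\<lambda>g. lin_subst A (h * g))" "additive (\<lambda>g. lin_subst A h * lin_subst A g)"
    "additive (\<lambda>h. lin_subst A (h * g))" "additive (\<lambda>h. lin_subst A h * lin_subst A g)"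
    for h g :: "'k mpoly"
    by unfold_locales (simp_all add: lin_subst_add distrib_left distrib_right)
  have "lin_subst A (Poly_Mapping.single m a * Poly_Mapping.single n b) =
      lin_subst A (Poly_Mapping.single m a) * lin_subst A (Poly_Mapping.single n b)" for m n a b
    by (simp add: mult_single lin_subst_single lookup_add power_add prod.distrib Cst_mult mult_ac)
  then have "lin_subst A (Poly_Mapping.single m a * g) =
      lin_subst A (Poly_Mapping.single m a) * lin_subst A g" for m a
    by (rule additive_eq_on_single[OF additive(1,2)])
  then show ?thesis
    by (rule additive_eq_on_single[OF additive(3,4)])
qed

lemma lin_subst_Cst [simp]: "lin_subst A (Cst c) = Cst c"
  by (simp add: Cst_def lin_subst_single)

lemma lin_subst_1 [simp]: "lin_subst A 1 = 1"
  using lin_subst_Cst[of A 1] by simp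

lemma lin_subst_Xv: "i < 3 \<Longrightarrow> lin_subst A (Xv i) = lin_row A i"
  by (erule less_3_cases) (simp_all add: Xv_def lin_subst_single lookup_single lessThan_nat_numeral)

lemma lin_subst_lin_form:
  "lin_subst A (lin_form x y z) =
     lin_form (x * A $$ (0,0) + y * A $$ (1,0) + z * A $$ (2,0))
       (x * A $$ (0,1) + y * A $$ (1,1) + z * A $$ (2,1))
       (x * A $$ (0,2) + y * A $$ (1,2) + z * A $$ (2,2))"
proof -
  have "lin_subst A (lin_form x y z) = Cst x * lin_row A 0 + Cst y * lin_row A 1 + Cst z * lin_row A 2"
    by (simp only: lin_form_def lin_subst_add lin_subst_mult lin_subst_Cst) (simp add: lin_subst_Xv)
  then show ?thesis
    by (simp only: lin_row_def lin_form_linear_combination)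
qed

lemma Pset_lin_subst: "lin_subst A f \<in> Pset"
  unfolding lin_subst_def lin_row_def
  by (intro Pset_sum Pset_mult Pset_Cst Pset_prod Pset_power Pset_lin_form)

lemma Pdeg_lin_subst:
  assumes "f \<in> Pdeg n"
  shows "lin_subst A f \<in> Pdeg n"
  unfolding lin_subst_def
proof (rule Pdeg_sum)
  fix m assume m: "m \<in> Poly_Mapping.keys f"
  then have "(\<Sum>i<3. Poly_Mapping.lookup m i * 1) = n"
    using assms mdeg_eq_sum[of "{..<3}" m] by (simp add: Pdeg_def Pset_iff)
  moreover have "(\<Prod>i<3. lin_row A i ^ Poly_Mapping.lookup m i) \<in> Pdeg (\<Sum>i<3. Poly_Mapping.lookup m i * 1)"
    unfolding lin_row_def by (intro Pdeg_prod Pdeg_power Pdeg_lin_form)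
  ultimately show "Cst (Poly_Mapping.lookup f m) * (\<Prod>i<3. lin_row A i ^ Poly_Mapping.lookup m i) \<in> Pdeg n"
    using Pdeg_mult[OF Pdeg_Cst] by fastforce
qed

lemma lin_subst_lin_subst:
  assumes "A \<in> carrier_mat 3 3" "B \<in> carrier_mat 3 3" "f \<in> Pset"
  shows "lin_subst B (lin_subst A f) = lin_subst (A * B) f"
  using assms(3)
proof (induction rule: Pset_induct)
  case (mult_Xv g i)
  then show ?case
    by (simp add: lin_subst_mult lin_subst_Xv lin_row_def lin_subst_lin_form index_mult_mat_3 assms)
qed (simp_all add: lin_subst_add)

lemma lin_subst_one:
  fixes f :: "'k::comm_ring_1 mpoly"
  assumes "f \<in> Pset"
  shows "lin_subst (1\<^sub>m 3) f = f"
  using assms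
proof (induction rule: Pset_induct)
  case (mult_Xv g i)
  then have "lin_row (1\<^sub>m 3) i = (Xv i :: 'k mpoly)"
    by (elim less_3_cases) (simp_all add: lin_row_def lin_form_Xv)
  with mult_Xv show ?case
    by (simp add: lin_subst_mult lin_subst_Xv)
qed (simp_all add: lin_subst_add)

lemma bij_betw_lin_subst:
  fixes A :: "'k::field mat"
  assumes A: "A \<in> carrier_mat 3 3" and det: "det A \<noteq> 0"
  shows "bij_betw (lin_subst A) Pset Pset"
proof -
  obtain B where B: "B \<in> carrier_mat 3 3" "A * B = 1\<^sub>m 3" "B * A = 1\<^sub>m 3"
    using det_non_zero_imp_unit[OF A det, unfolded Units_def ring_mat_def] by auto
  show ?thesis
    by (rule bij_betw_byWitness[where f' = "lin_subst B"])
       (auto simp: lin_subst_lin_subst lin_subst_one Pset_lin_subst A B)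
qed

lemma has_matrix_iff:
  "has_matrix \<phi> A \<longleftrightarrow> A \<in> carrier_mat 3 3 \<and> (\<forall>i<3. \<phi> (Xv i) = lin_row A i)"
  by (simp add: has_matrix_def sum_lessThan_3 lin_row_def lin_form_def)

lemma has_matrix_lin_subst: "A \<in> carrier_mat 3 3 \<Longrightarrow> has_matrix (lin_subst A) A"
  by (simp add: has_matrix_iff lin_subst_Xv)

lemma has_matrix_unique:
  assumes "has_matrix \<phi> A" "has_matrix \<phi> B"
  shows "A = B"
proof -
  have rows: "lin_row A i = lin_row B i" if "i < 3" for i
    using assms that by (simp add: has_matrix_iff)
  have "A $$ (i, j) = B $$ (i, j)" if "i < 3" "j < 3" for i j
    using rows[OF that(1)] that(2) by (elim less_3_cases) (simp_all add: lin_row_def lin_form_eq_iff)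
  then show ?thesis
    using assms by (intro eq_matI) (auto simp: has_matrix_iff)
qed

definition poisson_matrix :: "'k::comm_ring_1 mat \<Rightarrow> bool" where
  "poisson_matrix A \<longleftrightarrow> A $$ (0, 1) = 0 \<and> A $$ (0, 2) = 0 \<and>
     A $$ (0, 0) ^ 2 = A $$ (1, 1) * A $$ (2, 2) - A $$ (1, 2) * A $$ (2, 1)"

lemma poisson_matrix_block_lower:
  "poisson_matrix (mat_of_rows_list 3 [[\<epsilon>, 0, 0], [a, b, c], [d, e, f]]) \<longleftrightarrow> \<epsilon> ^ 2 = b * f - c * e"
  by (simp add: poisson_matrix_def mat_of_rows_list_def)

lemma lin_subst_Bgen:
  assumes A: "poisson_matrix A" and "i < 3" "j < 3"
  shows "lin_subst A (Bgen i j) = pbr (lin_row A i) (lin_row A j)"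
proof -
  have "lin_row A 0 = Cst (A $$ (0, 0)) * Xv 0"
    using A by (simp add: poisson_matrix_def lin_row_def lin_form_def)
  then have "lin_subst A (Cst 3 * Xv 0 * Xv 0) = Cst (3 * A $$ (0, 0) ^ 2) * (Xv 0 * Xv 0)"
    by (simp add: lin_subst_mult lin_subst_Xv Cst_mult power2_eq_square mult_ac)
  then have "lin_subst A (Cst 3 * Xv 0 * Xv 0) = pbr (lin_row A 1) (lin_row A 2)"
    using A by (simp add: poisson_matrix_def lin_row_def pbr_lin_form)
  moreover have "pbr (lin_row A 2) (lin_row A 1) = - pbr (lin_row A 1) (lin_row A 2)"
    by (simp add: pbr_eq algebra_simps)
  moreover have "pbr (lin_row A k) (lin_row A k) = 0" "pbr (lin_row A 0) (lin_row A k) = 0"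
    "pbr (lin_row A k) (lin_row A 0) = 0" for k
    using A by (simp_all add: poisson_matrix_def lin_row_def pbr_lin_form)
  ultimately show ?thesis
    using assms(2,3) by (elim less_3_cases) (simp_all add: Bgen_def additive.minus[OF additive_lin_subst])
qed

lemma lin_subst_pbr:
  assumes A: "poisson_matrix A" and f: "f \<in> Pset" and g: "g \<in> Pset"
  shows "lin_subst A (pbr f g) = pbr (lin_subst A f) (lin_subst A g)"
proof -
  have Xv_left: "lin_subst A (pbr (Xv i) g) = pbr (lin_row A i) (lin_subst A g)" if "i < 3" for i
    using g
  proof (induction rule: Pset_induct)
    case (mult_Xv h j)
    then show ?case
      by (simp add: pbr_mult_right pbr_Xv lin_subst_add lin_subst_mult lin_subst_Xv lin_subst_Bgen A that)
  qed (simp_all add: pbr_add_right lin_subst_add)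
  show ?thesis
    using f
  proof (induction rule: Pset_induct)
    case (mult_Xv h i)
    then show ?case
      by (simp add: pbr_mult_left lin_subst_add lin_subst_mult lin_subst_Xv Xv_left)
  qed (simp_all add: pbr_add_left lin_subst_add)
qed

lemma graded_poisson_aut_lin_subst:
  fixes A :: "'k::field mat"
  assumes "A \<in> carrier_mat 3 3" "det A \<noteq> 0" "poisson_matrix A"
  shows "graded_poisson_aut (lin_subst A)"
  using assms bij_betw_lin_subst Pdeg_lin_subst
  by (auto simp: graded_poisson_aut_def lin_subst_add lin_subst_mult lin_subst_pbr)

section \<open>Graded Poisson automorphisms\<close>

lemma graded_poisson_aut_eq_lin_subst:
  assumes aut: "graded_poisson_aut \<phi>" and A: "has_matrix \<phi> A" and f: "f \<in> Pset"
  shows "\<phi> f = lin_subst A f"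
  using f
proof (induction rule: Pset_induct)
  case zero
  have "\<phi> (0 + 0) = \<phi> 0 + \<phi> 0"
    using aut unfolding graded_poisson_aut_def by (meson Pset_0)
  then show ?case by simp
next
  case (Cst c)
  have "\<phi> (Cst c * 1) = Cst c * \<phi> 1"
    using aut by (simp only: graded_poisson_aut_def Pset_1)
  then show ?case
    using aut by (simp add: graded_poisson_aut_def)
next
  case (add g h)
  then show ?case
    using aut by (simp add: graded_poisson_aut_def lin_subst_add)
next
  case (mult_Xv g i)
  then show ?case
    using aut A by (simp add: graded_poisson_aut_def has_matrix_iff Pset_Xv lin_subst_mult lin_subst_Xv)
qed

lemma graded_poisson_aut_power_eq_lin_subst:
  assumes "graded_poisson_aut \<phi>" "has_matrix \<phi> A" "f \<in> Pset"
  shows "(\<phi> ^^ k) f = (lin_subst A ^^ k) f"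
proof (induction k)
  case (Suc k)
  have "(lin_subst A ^^ k) f \<in> Pset"
    using assms(3) by (cases k) (simp_all add: Pset_lin_subst)
  then show ?case
    using Suc assms(1,2) by (simp add: graded_poisson_aut_eq_lin_subst)
qed simp

lemma graded_poisson_aut_poisson_matrix:
  fixes \<phi> :: "'k::field_char_0 mpoly \<Rightarrow> 'k mpoly"
  assumes aut: "graded_poisson_aut \<phi>" and A: "has_matrix \<phi> A"
  shows "poisson_matrix A \<and> A $$ (0, 0) \<noteq> 0"
proof -
  let ?D = "A $$ (1, 1) * A $$ (2, 2) - A $$ (1, 2) * A $$ (2, 1)"
  have lin_subst: "\<phi> f = lin_subst A f" if "f \<in> Pset" for f
    using graded_poisson_aut_eq_lin_subst[OF aut A that] .
  have "Cst 3 * Xv 0 * Xv 0 \<in> (Pset :: 'k mpoly set)"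
    by (intro Pset_mult Pset_Cst Pset_Xv) simp_all
  then have "Cst 3 * (lin_row A 0 * lin_row A 0) = \<phi> (pbr (Xv 1) (Xv 2))"
    by (simp add: lin_subst lin_subst_mult lin_subst_Xv pbr_Xv Bgen_def mult.assoc)
  also have "\<dots> = pbr (\<phi> (Xv 1)) (\<phi> (Xv 2))"
    using aut by (simp add: graded_poisson_aut_def Pset_Xv)
  also have "\<dots> = pbr (lin_row A 1) (lin_row A 2)"
    using A by (simp add: has_matrix_iff)
  finally have "Cst 3 * (lin_row A 0 * lin_row A 0) = Cst (3 * ?D) * (Xv 0 * Xv 0)"
    by (simp add: lin_row_def pbr_lin_form)
  then have "Poly_Mapping.lookup (Cst 3 * (lin_row A 0 * lin_row A 0)) (Poly_Mapping.single t 2) =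
      Poly_Mapping.lookup (Cst (3 * ?D) * (Xv 0 * Xv 0)) (Poly_Mapping.single t 2)" for t
    by (simp only:)
  from this[of 0] this[of 1] this[of 2]
  have "A $$ (0, 0) * A $$ (0, 0) = ?D" "A $$ (0, 1) = 0" "A $$ (0, 2) = 0"
    by (simp_all only: lookup_Cst_mult lin_row_def lookup_lin_form_square lookup_Xv_mult_Xv)
       (simp_all del: right_diff_distrib_numeral)
  then have pm: "poisson_matrix A"
    by (simp add: poisson_matrix_def power2_eq_square)
  have "A $$ (0, 0) \<noteq> 0"
  proof
    assume "A $$ (0, 0) = 0"
    then have "\<phi> (Xv 0) = \<phi> 0"
      using pm A lin_subst[OF Pset_0]
      by (simp add: poisson_matrix_def has_matrix_iff lin_row_def lin_form_def)
    moreover have "inj_on \<phi> Pset"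
      using aut by (simp add: graded_poisson_aut_def bij_betw_def)
    ultimately have "Xv 0 = (0 :: 'k mpoly)"
      using Pset_Xv[of 0] by (auto dest: inj_onD)
    then show False
      using Xv_neq_0 by blast
  qed
  with pm show ?thesis ..
qed

lemma graded_poisson_aut_matrix_iff:
  fixes A :: "'k::field_char_0 mat"
  shows "(\<exists>\<phi>. graded_poisson_aut \<phi> \<and> has_matrix \<phi> A) \<longleftrightarrow>
    (\<exists>\<epsilon> a b c d e f. A = mat_of_rows_list 3 [[\<epsilon>, 0, 0], [a, b, c], [d, e, f]] \<and>
       b * f \<noteq> c * e \<and> \<epsilon> ^ 2 = b * f - c * e)"
proof
  assume "\<exists>\<phi>. graded_poisson_aut \<phi> \<and> has_matrix \<phi> A"
  then obtain \<phi> where aut: "graded_poisson_aut \<phi>" and A: "has_matrix \<phi> A"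
    by blast
  have pm: "poisson_matrix A" and "A $$ (0, 0) \<noteq> 0"
    using graded_poisson_aut_poisson_matrix[OF aut A] by simp_all
  moreover have "A \<in> carrier_mat 3 3"
    using A by (simp add: has_matrix_iff)
  ultimately have "A = mat_of_rows_list 3 [[A $$ (0, 0), 0, 0], [A $$ (1, 0), A $$ (1, 1), A $$ (1, 2)],
                                          [A $$ (2, 0), A $$ (2, 1), A $$ (2, 2)]]"
    by (intro mat_3_eq_block_lower) (simp_all add: poisson_matrix_def)
  moreover have "A $$ (1, 1) * A $$ (2, 2) \<noteq> A $$ (1, 2) * A $$ (2, 1)"
    using pm \<open>A $$ (0, 0) \<noteq> 0\<close> by (auto simp: poisson_matrix_def)
  ultimately show "\<exists>\<epsilon> a b c d e f. A = mat_of_rows_list 3 [[\<epsilon>, 0, 0], [a, b, c], [d, e, f]] \<and>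
       b * f \<noteq> c * e \<and> \<epsilon> ^ 2 = b * f - c * e"
    using pm unfolding poisson_matrix_def by blast

next
  assume "\<exists>\<epsilon> a b c d e f. A = mat_of_rows_list 3 [[\<epsilon>, 0, 0], [a, b, c], [d, e, f]] \<and>
       b * f \<noteq> c * e \<and> \<epsilon> ^ 2 = b * f - c * e"
  then obtain \<epsilon> a b c d e f where A: "A = mat_of_rows_list 3 [[\<epsilon>, 0, 0], [a, b, c], [d, e, f]]"
    and "b * f \<noteq> c * e" and \<epsilon>: "\<epsilon> ^ 2 = b * f - c * e"
    by blast
  then have "det A \<noteq> 0"
    by (auto simp: det_block_lower)
  moreover have "A \<in> carrier_mat 3 3" "poisson_matrix A"
    using \<epsilon> by (simp_all add: A mat_of_rows_list_3_carrier poisson_matrix_block_lower)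
  ultimately show "\<exists>\<phi>. graded_poisson_aut \<phi> \<and> has_matrix \<phi> A"
    using graded_poisson_aut_lin_subst has_matrix_lin_subst by blast
qed

section \<open>Poisson reflections\<close>

lemma reflection_char_poly_coeffs:
  fixes \<epsilon> D s \<xi> :: "'k::idom"
  assumes cp: "[:-\<epsilon>, 1:] * [:D, -s, 1:] = [:-1, 1:] ^ 2 * [:-\<xi>, 1:]"
    and \<epsilon>: "\<epsilon> ^ 2 = D" and \<xi>: "\<xi> \<noteq> 1"
  shows "\<epsilon> = -1 \<and> s = 2 \<and> D = 1"
proof -
  have "[:-(\<epsilon> * D), D + \<epsilon> * s, -(\<epsilon> + s), 1:] = [:-\<xi>, 1 + 2 * \<xi>, -(2 + \<xi>), 1:]"
    using cp by (simp add: power2_eq_square algebra_simps)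
  then have \<xi>_eq: "\<xi> = \<epsilon> ^ 3" and "D + \<epsilon> * s = 1 + 2 * \<xi>" and s: "s = 2 + \<xi> - \<epsilon>"
    using \<epsilon> by (simp_all add: power3_eq_cube power2_eq_square algebra_simps)
  then have "(\<epsilon> - 1) ^ 3 * (\<epsilon> + 1) = 0"
    using \<epsilon> by (simp add: power3_eq_cube power2_eq_square algebra_simps)
  moreover have "\<epsilon> \<noteq> 1"
    using \<xi> \<xi>_eq by auto
  ultimately have "\<epsilon> = -1"
    by (simp add: eq_neg_iff_add_eq_0)
  then show ?thesis
    using \<epsilon> s \<xi>_eq by simp
qed

lemma lin_subst_power_unipotent:
  fixes \<epsilon> a b c d e f :: "'k::comm_ring_1"
  defines "A \<equiv> mat_of_rows_list 3 [[\<epsilon>, 0, 0], [a, b, c], [d, e, f]]"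
  assumes trace: "b + f = 2" and det: "b * f - c * e = 1"
  shows "\<exists>\<alpha>. (lin_subst A ^^ k) (lin_form x y z) =
    lin_form \<alpha> (y + of_nat k * (y * (b - 1) + z * e)) (z + of_nat k * (y * c + z * (f - 1)))"
proof (induction k)
  case 0
  show ?case by auto
next
  case (Suc k)
  let ?P = "y * (b - 1) + z * e" and ?Q = "y * c + z * (f - 1)" and ?k = "of_nat k :: 'k"
  obtain \<alpha> where IH: "(lin_subst A ^^ k) (lin_form x y z) = lin_form \<alpha> (y + ?k * ?P) (z + ?k * ?Q)"
    using Suc.IH by blast
  have ce: "c * e = b * f - 1"
    using det by (simp add: algebra_simps)
  have "(b - 1) * (b - 1) + c * e = b * (b + f - 2)" "(f - 1) * (f - 1) + c * e = f * (b + f - 2)"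
    unfolding ce by (simp_all add: algebra_simps)
  txt \<open>Together with the trace condition, \<open>(B - 1)\<^sup>2 = 0\<close> for the lower right block \<open>B\<close>.\<close>
  then have nilpotent: "(b - 1) * (b - 1) + c * e = 0" "(f - 1) * (f - 1) + c * e = 0"
    using trace by simp_all
  have "(y + ?k * ?P) * b + (z + ?k * ?Q) * e =
      y + (?k + 1) * ?P + ?k * (y * ((b - 1) * (b - 1) + c * e) + z * e * (b + f - 2))"
    "(y + ?k * ?P) * c + (z + ?k * ?Q) * f =
      z + (?k + 1) * ?Q + ?k * (y * c * (b + f - 2) + z * ((f - 1) * (f - 1) + c * e))"
    by (simp_all add: algebra_simps)
  then have "(y + ?k * ?P) * b + (z + ?k * ?Q) * e = y + of_nat (Suc k) * ?P"
    "(y + ?k * ?P) * c + (z + ?k * ?Q) * f = z + of_nat (Suc k) * ?Q"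
    using nilpotent trace by (simp_all add: add.commute)
  moreover have "lin_subst A (lin_form p q r) = lin_form (p * \<epsilon> + q * a + r * d) (q * b + r * e) (q * c + r * f)"
    for p q r
    by (simp add: A_def lin_subst_lin_form mat_of_rows_list_def)
  ultimately show ?case
    by (auto simp: IH)
qed

lemma unipotent_of_finite_order:
  fixes \<epsilon> a b c d e f :: "'k::field_char_0"
  defines "A \<equiv> mat_of_rows_list 3 [[\<epsilon>, 0, 0], [a, b, c], [d, e, f]]"
  assumes "b + f = 2" "b * f - c * e = 1" and "n > 0"
    and "(lin_subst A ^^ n) (Xv 1) = Xv 1" "(lin_subst A ^^ n) (Xv 2) = Xv 2"
  shows "b = 1 \<and> c = 0 \<and> e = 0 \<and> f = 1"
proof -
  note power = lin_subst_power_unipotent[OF assms(2,3), where \<epsilon> = \<epsilon> and a = a and d = d and k = n,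
      folded A_def]
  obtain \<alpha> \<beta> where
    "(lin_subst A ^^ n) (lin_form 0 1 0) = lin_form \<alpha> (1 + of_nat n * (b - 1)) (of_nat n * c)"
    "(lin_subst A ^^ n) (lin_form 0 0 1) = lin_form \<beta> (of_nat n * e) (1 + of_nat n * (f - 1))"
    using power[of 0 1 0] power[of 0 0 1] by auto
  then have "lin_form \<alpha> (1 + of_nat n * (b - 1)) (of_nat n * c) = lin_form 0 1 0"
    "lin_form \<beta> (of_nat n * e) (1 + of_nat n * (f - 1)) = lin_form 0 0 1"
    using assms(5,6) by (simp_all only: lin_form_Xv)
  then show ?thesis
    using \<open>n > 0\<close> by (simp add: lin_form_eq_iff)
qed

lemma poisson_reflection_matrix:
  fixes \<phi> :: "'k::field_char_0 mpoly \<Rightarrow> 'k mpoly"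
  assumes refl: "poisson_reflection \<phi>" and A: "has_matrix \<phi> A"
  shows "A = mat_of_rows_list 3 [[-1, 0, 0], [A $$ (1, 0), 1, 0], [A $$ (2, 0), 0, 1]]"
proof -
  have aut: "graded_poisson_aut \<phi>"
    using refl by (simp add: poisson_reflection_def)
  obtain n where "n > 0" and order: "\<And>f. f \<in> Pset \<Longrightarrow> (\<phi> ^^ n) f = f"
    using refl by (auto simp: poisson_reflection_def)
  obtain A' m \<xi> where "has_matrix \<phi> A'" "\<xi> \<noteq> 1" and cp: "char_poly A' = [:-1, 1:] ^ 2 * [:-\<xi>, 1:]"
    using refl by (auto simp: poisson_reflection_def)
  then have "A' = A"
    using A has_matrix_unique by blast
  obtain \<epsilon> a b c d e f where A_eq: "A = mat_of_rows_list 3 [[\<epsilon>, 0, 0], [a, b, c], [d, e, f]]"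
    and \<epsilon>: "\<epsilon> ^ 2 = b * f - c * e"
    using graded_poisson_aut_matrix_iff aut A by blast
  have "[:-\<epsilon>, 1:] * [:b * f - c * e, -(b + f), 1:] = [:-1, 1:] ^ 2 * [:-\<xi>, 1:]"
    using cp by (simp only: \<open>A' = A\<close> A_eq char_poly_block_lower)
  from reflection_char_poly_coeffs[OF this \<epsilon> \<open>\<xi> \<noteq> 1\<close>]
  have "\<epsilon> = -1 \<and> b + f = 2 \<and> b * f - c * e = 1" .
  moreover have "b = 1 \<and> c = 0 \<and> e = 0 \<and> f = 1"
    using unipotent_of_finite_order[of b f c e n \<epsilon> a d] calculation \<open>n > 0\<close>
      order[OF Pset_Xv] graded_poisson_aut_power_eq_lin_subst[OF aut A Pset_Xv]
    by (simp add: A_eq)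
  ultimately show ?thesis
    by (simp add: A_eq mat_of_rows_list_def)
qed

lemma primitive_root_2_neg_one: "primitive_root 2 (-1 :: 'k::field_char_0)"
  by (auto simp: primitive_root_def less_2_cases_iff)

lemma poisson_reflection_lin_subst:
  fixes a d :: "'k::field_char_0"
  defines "A \<equiv> mat_of_rows_list 3 [[-1, 0, 0], [a, 1, 0], [d, 0, 1]]"
  shows "poisson_reflection (lin_subst A)"
proof -
  have A: "A \<in> carrier_mat 3 3"
    by (simp add: A_def mat_of_rows_list_3_carrier)
  have "(A * A) $$ (i, j) = 1\<^sub>m 3 $$ (i, j)" if "i < 3" "j < 3" for i j
  proof -
    have "(A * A) $$ (i, j) = A $$ (i, 0) * A $$ (0, j) + A $$ (i, 1) * A $$ (1, j) + A $$ (i, 2) * A $$ (2, j)"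
      by (rule index_mult_mat_3[OF A A that])
    also have "\<dots> = 1\<^sub>m 3 $$ (i, j)"
      using that by (elim less_3_cases) (simp_all add: A_def mat_of_rows_list_def)
    finally show ?thesis .
  qed
  then have "A * A = 1\<^sub>m 3"
    using A by (intro eq_matI) auto
  then have "(lin_subst A ^^ 2) f = f" if "f \<in> Pset" for f
    using that A by (simp add: numeral_2_eq_2 lin_subst_lin_subst lin_subst_one)
  moreover have "graded_poisson_aut (lin_subst A)"
    using A by (intro graded_poisson_aut_lin_subst) (simp_all add: A_def det_block_lower poisson_matrix_block_lower)
  moreover have "char_poly A = [:-1, 1:] ^ 2 * [:-(-1), 1:]"
    by (simp add: A_def char_poly_block_lower power2_eq_square)
  moreover have "(-1 :: 'k) \<noteq> 1"
    by simp
  ultimately show ?thesis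
    using has_matrix_lin_subst[OF A] primitive_root_2_neg_one unfolding poisson_reflection_def
    by (metis zero_less_numeral)
qed

lemma poisson_reflection_matrix_iff:
  fixes A :: "'k::field_char_0 mat"
  shows "(\<exists>\<phi>. poisson_reflection \<phi> \<and> has_matrix \<phi> A) \<longleftrightarrow>
    (\<exists>a d. A = mat_of_rows_list 3 [[-1, 0, 0], [a, 1, 0], [d, 0, 1]])"
  using poisson_reflection_matrix poisson_reflection_lin_subst has_matrix_lin_subst mat_of_rows_list_3_carrier
  by metis

theorem lemma3p1p1:
  fixes dummy :: "'k::field_char_0"
  assumes alg_closed: "\<And>p :: 'k poly. degree p > 0 \<Longrightarrow> \<exists>x. poly p x = 0"
  shows "{A :: 'k mat. \<exists>\<phi>. graded_poisson_aut \<phi> \<and> has_matrix \<phi> A} =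
           {mat_of_rows_list 3 [[\<epsilon>, 0, 0], [a, b, c], [d, e, f]] | \<epsilon> a b c d e f.
              b * f \<noteq> c * e \<and> \<epsilon> ^ 2 = b * f - c * e}
     \<and> {A :: 'k mat. \<exists>\<phi>. poisson_reflection \<phi> \<and> has_matrix \<phi> A} =
           {mat_of_rows_list 3 [[-1, 0, 0], [a, 1, 0], [d, 0, 1]] | a d. True}"
  by (auto simp: graded_poisson_aut_matrix_iff poisson_reflection_matrix_iff)

end
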